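(* Let $(\mathcal A,\jmath)_K$ be a $\mathrm{C}^*$-net bundle over a pathwise connected poset $K$ and fix $o\in K$. The set of states of $(\mathcal A,\jmath)_K$ is in one-to-one correspondence with the set of $\pi_1^o(K)$-invariant states of the holonomy dynamical system $(\mathcal A_o,\pi_1^o(K),\jmath_* )$.
   Context: Poset homotopy: $0$-simplices are elements of $K$; an $n$-simplex $x$ ($n\ge1$) consists of $(n-1)$-simplices $\partial_0x,\dots,\partial_nx$ and a support $|x|\in K$ with $|\partial_ix|\le|x|$. Paths are concatenations $b_n*\cdots*b_1$ with $\partial_0b_i=\partial_1b_{i+1}$; homotopy is generated by replacing consecutive $\partial_0c*\partial_2c$ by $\partial_1c$ or conversely; $\pi_1^o(K)$ is the group of homotopy classes of loops at $o$. A $\mathrm{C}^*$-net bundle: unital $\mathrm{C}^*$-algebras $\mathcal A_a$ and ${}^*$-isomorphisms $\jmath_{ea}:\mathcal A_a\to\mathcal A_e$ ($a\le e$) with $\jmath_{ea}\circ\jmath_{ad}=\jmath_{ed}$; $\jmath_{ae}:=\jmath_{ea}^{-1}$. Holonomy: $\jmath_b:=\jmath_{\partial_0b\,|b|}\circ\jmath_{|b|\,\partial_1b}$ for a $1$-simplex $b$, $\jmath_p:=\jmath_{b_n}\circ\cdots\circ\jmath_{b_1}$ for a path; $\jmath_p$ is homotopy invariant and $\jmath_{*,[p]}:=\jmath_p$ defines an action of $\pi_1^o(K)$ on $\mathcal A_o$. A state of the net bundle is a family of states $\omega_a$ of $\mathcal A_a$ with $\omega_a=\omega_e\circ\jmath_{ea}$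 for $a\le e$; an invariant state of the dynamical system is a state $\varphi$ of $\mathcal A_o$ with $\varphi\circ\jmath_{*,[p]}=\varphi$ for all $[p]$. *)

theory Defs
  imports Complex_Main "HOL-Library.FuncSet"
begin

record 'x cstar =
  cs_carrier :: "'x set"
  cs_add :: "'x \<Rightarrow> 'x \<Rightarrow> 'x"
  cs_mul :: "'x \<Rightarrow> 'x \<Rightarrow> 'x"
  cs_smul :: "complex \<Rightarrow> 'x \<Rightarrow> 'x"
  cs_zero :: 'x
  cs_one :: 'x
  cs_star :: "'x \<Rightarrow> 'x"
  cs_norm :: "'x \<Rightarrow> real"

definition cs_diff :: "'x cstar \<Rightarrow> 'x \<Rightarrow> 'x \<Rightarrow> 'x" where
  "cs_diff A x y = cs_add A x (cs_smul A (-1) y)"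

definition unital_cstar_algebra :: "'x cstar \<Rightarrow> bool" where
  "unital_cstar_algebra A \<longleftrightarrow>
    (let C = cs_carrier A; ad = cs_add A; mu = cs_mul A; sm = cs_smul A;
         z = cs_zero A; u = cs_one A; st = cs_star A; n = cs_norm A in
     z \<in> C \<and> u \<in> C \<and>
     (\<forall>x\<in>C. \<forall>y\<in>C. ad x y \<in> C \<and> mu x y \<in> C) \<and>
     (\<forall>a. \<forall>x\<in>C. sm a x \<in> C) \<and> (\<forall>x\<in>C. st x \<in> C) \<and>
     \<comment> \<open>complex vector space\<close>
     (\<forall>x\<in>C. \<forall>y\<in>C. \<forall>w\<in>C. ad (ad x y) w = ad x (ad y w)) \<and>
     (\<forall>x\<in>C. \<forall>y\<in>C. ad x y = ad y x) \<and>
     (\<forall>x\<in>C. ad z x = x) \<and>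
     (\<forall>x\<in>C. ad x (sm (-1) x) = z) \<and>
     (\<forall>x\<in>C. sm 1 x = x) \<and>
     (\<forall>a b. \<forall>x\<in>C. sm (a * b) x = sm a (sm b x)) \<and>
     (\<forall>a b. \<forall>x\<in>C. sm (a + b) x = ad (sm a x) (sm b x)) \<and>
     (\<forall>a. \<forall>x\<in>C. \<forall>y\<in>C. sm a (ad x y) = ad (sm a x) (sm a y)) \<and>
     \<comment> \<open>unital associative algebra\<close>
     (\<forall>x\<in>C. \<forall>y\<in>C. \<forall>w\<in>C. mu (mu x y) w = mu x (mu y w)) \<and>
     (\<forall>x\<in>C. \<forall>y\<in>C. \<forall>w\<in>C. mu x (ad y w) = ad (mu x y) (mu x w)) \<and>
     (\<forall>x\<in>C. \<forall>y\<in>C. \<forall>w\<in>C. mu (ad x y) w = ad (mu x w) (mu y w)) \<and>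
     (\<forall>a. \<forall>x\<in>C. \<forall>y\<in>C. mu (sm a x) y = sm a (mu x y) \<and> mu x (sm a y) = sm a (mu x y)) \<and>
     (\<forall>x\<in>C. mu u x = x \<and> mu x u = x) \<and>
     \<comment> \<open>involution\<close>
     (\<forall>x\<in>C. st (st x) = x) \<and>
     (\<forall>x\<in>C. \<forall>y\<in>C. st (ad x y) = ad (st x) (st y)) \<and>
     (\<forall>a. \<forall>x\<in>C. st (sm a x) = sm (cnj a) (st x)) \<and>
     (\<forall>x\<in>C. \<forall>y\<in>C. st (mu x y) = mu (st y) (st x)) \<and>
     \<comment> \<open>submultiplicative norm with the C*-identity\<close>
     (\<forall>x\<in>C. 0 \<le> n x \<and> (n x = 0 \<longleftrightarrow> x = z)) \<and>
     (\<forall>x\<in>C. \<forall>y\<in>C. n (ad x y) \<le> n x + n y) \<and>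
     (\<forall>a. \<forall>x\<in>C. n (sm a x) = cmod a * n x) \<and>
     (\<forall>x\<in>C. \<forall>y\<in>C. n (mu x y) \<le> n x * n y) \<and>
     (\<forall>x\<in>C. n (mu (st x) x) = (n x)\<^sup>2) \<and>
     \<comment> \<open>completeness\<close>
     (\<forall>s::nat \<Rightarrow> 'x. (\<forall>k. s k \<in> C) \<longrightarrow>
        (\<forall>e>0. \<exists>N. \<forall>m\<ge>N. \<forall>k\<ge>N. n (cs_diff A (s m) (s k)) < e) \<longrightarrow>
        (\<exists>l\<in>C. (\<lambda>k. n (cs_diff A (s k) l)) \<longlonglongrightarrow> 0)))"

text \<open>A state: a positive normalised linear functional (taken extensional, i.e.
  \<open>undefined\<close> off the carrier, so that states are determined by their values on it).\<close>
definition is_state :: "'x cstar \<Rightarrow> ('x \<Rightarrow> complex) \<Rightarrow> bool" where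
  "is_state A \<omega> \<longleftrightarrow> \<omega> \<in> extensional (cs_carrier A) \<and>
     (\<forall>x\<in>cs_carrier A. \<forall>y\<in>cs_carrier A. \<omega> (cs_add A x y) = \<omega> x + \<omega> y) \<and>
     (\<forall>a. \<forall>x\<in>cs_carrier A. \<omega> (cs_smul A a x) = a * \<omega> x) \<and>
     (\<forall>x\<in>cs_carrier A. Im (\<omega> (cs_mul A (cs_star A x) x)) = 0 \<and>
                         Re (\<omega> (cs_mul A (cs_star A x) x)) \<ge> 0) \<and>
     \<omega> (cs_one A) = 1"

definition star_iso :: "'x cstar \<Rightarrow> 'x cstar \<Rightarrow> ('x \<Rightarrow> 'x) \<Rightarrow> bool" where
  "star_iso A B f \<longleftrightarrow> bij_betw f (cs_carrier A) (cs_carrier B) \<and>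
     (\<forall>x\<in>cs_carrier A. \<forall>y\<in>cs_carrier A.
        f (cs_add A x y) = cs_add B (f x) (f y) \<and> f (cs_mul A x y) = cs_mul B (f x) (f y)) \<and>
     (\<forall>a. \<forall>x\<in>cs_carrier A. f (cs_smul A a x) = cs_smul B a (f x)) \<and>
     (\<forall>x\<in>cs_carrier A. f (cs_star A x) = cs_star B (f x)) \<and>
     f (cs_one A) = cs_one B"

type_synonym 'k simplex1 = "'k \<times> 'k \<times> 'k"

definition bd0 :: "'k simplex1 \<Rightarrow> 'k" where "bd0 b = fst b"
definition bd1 :: "'k simplex1 \<Rightarrow> 'k" where "bd1 b = fst (snd b)"
definition supp :: "'k simplex1 \<Rightarrow> 'k" where "supp b = snd (snd b)"

definition is_simplex1 :: "'k::order set \<Rightarrow> 'k simplex1 \<Rightarrow> bool" where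
  "is_simplex1 K b \<longleftrightarrow> bd0 b \<in> K \<and> bd1 b \<in> K \<and> supp b \<in> K \<and>
     bd0 b \<le> supp b \<and> bd1 b \<le> supp b"

text \<open>A path from \<open>a\<close> to \<open>e\<close>, listed in order of traversal: the list
  \<open>[b\<^sub>1,\<dots>,b\<^sub>n]\<close> represents \<open>b\<^sub>n * \<dots> * b\<^sub>1\<close>
  (with \<open>\<partial>\<^sub>0 b\<^sub>i = \<partial>\<^sub>1 b\<^sub>i\<^sub>+\<^sub>1\<close>).\<close>
fun is_path :: "'k::order set \<Rightarrow> 'k \<Rightarrow> 'k \<Rightarrow> 'k simplex1 list \<Rightarrow> bool" where
  "is_path K a e [] \<longleftrightarrow> a \<in> K \<and> a = e"
| "is_path K a e (b # bs) \<longleftrightarrow> is_simplex1 K b \<and> bd1 b = a \<and> is_path K (bd0 b) e bs"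

definition pathwise_connected :: "'k::order set \<Rightarrow> bool" where
  "pathwise_connected K \<longleftrightarrow> (\<forall>a\<in>K. \<forall>e\<in>K. \<exists>p. is_path K a e p)"

text \<open>\<open>j e a\<close> is \<open>\<jmath>\<^sub>e\<^sub>a : \<A>\<^sub>a \<rightarrow> \<A>\<^sub>e\<close> for \<open>a \<le> e\<close>.\<close>
definition cstar_net_bundle ::
  "'k::order set \<Rightarrow> ('k \<Rightarrow> 'x cstar) \<Rightarrow> ('k \<Rightarrow> 'k \<Rightarrow> 'x \<Rightarrow> 'x) \<Rightarrow> bool" where
  "cstar_net_bundle K A j \<longleftrightarrow>
     (\<forall>a\<in>K. unital_cstar_algebra (A a)) \<and>
     (\<forall>a\<in>K. \<forall>e\<in>K. a \<le> e \<longrightarrow> star_iso (A a) (A e) (j e a)) \<and>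
     (\<forall>d\<in>K. \<forall>a\<in>K. \<forall>e\<in>K. d \<le> a \<longrightarrow> a \<le> e \<longrightarrow>
        (\<forall>x\<in>cs_carrier (A d). j e a (j a d x) = j e d x))"

definition hol1 :: "('k \<Rightarrow> 'x cstar) \<Rightarrow> ('k \<Rightarrow> 'k \<Rightarrow> 'x \<Rightarrow> 'x) \<Rightarrow> 'k simplex1 \<Rightarrow> 'x \<Rightarrow> 'x" where
  "hol1 A j b = inv_into (cs_carrier (A (bd0 b))) (j (supp b) (bd0 b)) \<circ> j (supp b) (bd1 b)"

fun hol :: "('k \<Rightarrow> 'x cstar) \<Rightarrow> ('k \<Rightarrow> 'k \<Rightarrow> 'x \<Rightarrow> 'x) \<Rightarrow> 'k simplex1 list \<Rightarrow> 'x \<Rightarrow> 'x" where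
  "hol A j [] = id"
| "hol A j (b # bs) = hol A j bs \<circ> hol1 A j b"

definition net_state ::
  "'k::order set \<Rightarrow> ('k \<Rightarrow> 'x cstar) \<Rightarrow> ('k \<Rightarrow> 'k \<Rightarrow> 'x \<Rightarrow> 'x) \<Rightarrow> ('k \<Rightarrow> 'x \<Rightarrow> complex) \<Rightarrow> bool" where
  "net_state K A j \<omega> \<longleftrightarrow> \<omega> \<in> extensional K \<and> (\<forall>a\<in>K. is_state (A a) (\<omega> a)) \<and>
     (\<forall>a\<in>K. \<forall>e\<in>K. a \<le> e \<longrightarrow> (\<forall>x\<in>cs_carrier (A a). \<omega> a x = \<omega> e (j e a x)))"

text \<open>Invariant states of the holonomy dynamical system: \<open>\<phi> \<circ> \<jmath>\<^sub>*\<^sub>,\<^sub>[\<^sub>p\<^sub>] = \<phi>\<close> for every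
  class \<open>[p] \<in> \<pi>\<^sub>1\<^sup>o(K)\<close>; since \<open>\<jmath>\<^sub>*\<^sub>,\<^sub>[\<^sub>p\<^sub>] := \<jmath>\<^sub>p\<close>, this ranges over all loops at \<open>z\<close>.\<close>
definition invariant_state ::
  "'k::order set \<Rightarrow> ('k \<Rightarrow> 'x cstar) \<Rightarrow> ('k \<Rightarrow> 'k \<Rightarrow> 'x \<Rightarrow> 'x) \<Rightarrow> 'k \<Rightarrow> ('x \<Rightarrow> complex) \<Rightarrow> bool" where
  "invariant_state K A j z \<phi> \<longleftrightarrow> is_state (A z) \<phi> \<and>
     (\<forall>p. is_path K z z p \<longrightarrow> (\<forall>x\<in>cs_carrier (A z). \<phi> (hol A j p x) = \<phi> x))"

end

theory Submission
  imports Defs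
begin

text \<open>Holonomy along a path from \<open>a\<close> to \<open>z\<close> is a \<open>*\<close>-isomorphism
  \<open>\<A>\<^sub>a \<rightarrow> \<A>\<^sub>z\<close> that carries net states to net states, so restricting a net state
  to \<open>z\<close> yields a state invariant under loop holonomy, and by connectedness a net state is
  determined by its restriction. Conversely, an invariant state \<open>\<phi>\<close> of \<open>\<A>\<^sub>z\<close>
  is pulled back to each \<open>\<A>\<^sub>a\<close> along the holonomy of any path from \<open>a\<close> to
  \<open>z\<close>; invariance makes this independent of the path, because two such paths differ by the
  loop obtained by running one of them backwards and then the other.\<close>

lemma unital_cstar_algebra_closed:
  assumes "unital_cstar_algebra A"
  shows "cs_one A \<in> cs_carrier A"
    and "x \<in> cs_carrier A \<Longrightarrow> y \<in> cs_carrier A \<Longrightarrow> cs_add A x y \<in> cs_carrier A"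
    and "x \<in> cs_carrier A \<Longrightarrow> y \<in> cs_carrier A \<Longrightarrow> cs_mul A x y \<in> cs_carrier A"
    and "x \<in> cs_carrier A \<Longrightarrow> cs_smul A a x \<in> cs_carrier A"
    and "x \<in> cs_carrier A \<Longrightarrow> cs_star A x \<in> cs_carrier A"
  using assms unfolding unital_cstar_algebra_def Let_def by simp_all

lemma star_iso_bij: "star_iso A B f \<Longrightarrow> bij_betw f (cs_carrier A) (cs_carrier B)"
  unfolding star_iso_def by blast

lemma star_iso_in_carrier: "star_iso A B f \<Longrightarrow> x \<in> cs_carrier A \<Longrightarrow> f x \<in> cs_carrier B"
  using star_iso_bij bij_betw_apply by metis

lemma star_iso_id: "star_iso A A id"
  unfolding star_iso_def by auto

lemma star_iso_comp:
  assumes f: "star_iso A B f" and g: "star_iso B C g"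
  shows "star_iso A C (g \<circ> f)"
  using f g star_iso_in_carrier[OF f] bij_betw_trans[OF star_iso_bij[OF f] star_iso_bij[OF g]]
  unfolding star_iso_def by auto

lemma star_iso_inv_into:
  assumes f: "star_iso A B f" and A: "unital_cstar_algebra A"
  shows "star_iso B A (inv_into (cs_carrier A) f)"
proof -
  let ?g = "inv_into (cs_carrier A) f"
  have bij: "bij_betw f (cs_carrier A) (cs_carrier B)" using star_iso_bij[OF f] .
  have g_in: "?g y \<in> cs_carrier A" if "y \<in> cs_carrier B" for y
    using bij_betw_apply[OF bij_betw_inv_into[OF bij] that] .
  have f_g: "f (?g y) = y" if "y \<in> cs_carrier B" for y
    using bij_betw_inv_into_right[OF bij that] .
  have g_f: "?g (f x) = x" if "x \<in> cs_carrier A" for x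
    using bij_betw_inv_into_left[OF bij that] .
  note closed = unital_cstar_algebra_closed[OF A]
  show ?thesis
    unfolding star_iso_def
  proof (intro conjI ballI allI)
    show "bij_betw ?g (cs_carrier B) (cs_carrier A)" using bij_betw_inv_into[OF bij] .
  next
    fix x y assume x: "x \<in> cs_carrier B" and y: "y \<in> cs_carrier B"
    have "f (cs_add A (?g x) (?g y)) = cs_add B x y"
      using f g_in[OF x] g_in[OF y] f_g[OF x] f_g[OF y] unfolding star_iso_def by simp
    then show "?g (cs_add B x y) = cs_add A (?g x) (?g y)"
      using g_f closed(2)[OF g_in[OF x] g_in[OF y]] by metis
    have "f (cs_mul A (?g x) (?g y)) = cs_mul B x y"
      using f g_in[OF x] g_in[OF y] f_g[OF x] f_g[OF y] unfolding star_iso_def by simp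
    then show "?g (cs_mul B x y) = cs_mul A (?g x) (?g y)"
      using g_f closed(3)[OF g_in[OF x] g_in[OF y]] by metis
  next
    fix a x assume x: "x \<in> cs_carrier B"
    have "f (cs_smul A a (?g x)) = cs_smul B a x"
      using f g_in[OF x] f_g[OF x] unfolding star_iso_def by simp
    then show "?g (cs_smul B a x) = cs_smul A a (?g x)"
      using g_f closed(4)[OF g_in[OF x]] by metis
  next
    fix x assume x: "x \<in> cs_carrier B"
    have "f (cs_star A (?g x)) = cs_star B x"
      using f g_in[OF x] f_g[OF x] unfolding star_iso_def by simp
    then show "?g (cs_star B x) = cs_star A (?g x)"
      using g_f closed(5)[OF g_in[OF x]] by metis
  next
    show "?g (cs_one B) = cs_one A"
      using f g_f[OF closed(1)] unfolding star_iso_def by metis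
  qed
qed

lemma is_state_star_iso_pullback:
  assumes f: "star_iso A B f" and A: "unital_cstar_algebra A" and \<phi>: "is_state B \<phi>"
  shows "is_state A (restrict (\<phi> \<circ> f) (cs_carrier A))"
proof -
  note closed = unital_cstar_algebra_closed[OF A]
  note f_in = star_iso_in_carrier[OF f]
  have f_star_mul: "f (cs_mul A (cs_star A x) x) = cs_mul B (cs_star B (f x)) (f x)"
    if "x \<in> cs_carrier A" for x
    using f that closed(5)[OF that] unfolding star_iso_def by simp
  show ?thesis
    unfolding is_state_def
  proof (intro conjI ballI allI)
    fix x y assume "x \<in> cs_carrier A" "y \<in> cs_carrier A"
    then show "restrict (\<phi> \<circ> f) (cs_carrier A) (cs_add A x y) =
        restrict (\<phi> \<circ> f) (cs_carrier A) x + restrict (\<phi> \<circ> f) (cs_carrier A) y"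
      using f \<phi> f_in closed(2) unfolding star_iso_def is_state_def by simp
  next
    fix a x assume "x \<in> cs_carrier A"
    then show "restrict (\<phi> \<circ> f) (cs_carrier A) (cs_smul A a x) =
        a * restrict (\<phi> \<circ> f) (cs_carrier A) x"
      using f \<phi> f_in closed(4) unfolding star_iso_def is_state_def by simp
  next
    fix x assume x: "x \<in> cs_carrier A"
    then show "Im (restrict (\<phi> \<circ> f) (cs_carrier A) (cs_mul A (cs_star A x) x)) = 0"
      and "Re (restrict (\<phi> \<circ> f) (cs_carrier A) (cs_mul A (cs_star A x) x)) \<ge> 0"
      using \<phi> f_star_mul[OF x] f_in[OF x] closed(3)[OF closed(5)[OF x] x]
      unfolding is_state_def by simp_all
  next
    show "restrict (\<phi> \<circ> f) (cs_carrier A) \<in> extensional (cs_carrier A)" by simp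
    show "restrict (\<phi> \<circ> f) (cs_carrier A) (cs_one A) = 1"
      using f \<phi> closed(1) unfolding star_iso_def is_state_def by simp
  qed
qed

lemma is_state_extensional:
  "is_state A \<phi> \<Longrightarrow> x \<notin> cs_carrier A \<Longrightarrow> \<phi> x = undefined"
  unfolding is_state_def extensional_def by blast

lemma is_path_append:
  "is_path K a m p \<Longrightarrow> is_path K m e q \<Longrightarrow> is_path K a e (p @ q)"
  by (induction p arbitrary: a) auto

lemma hol_append: "hol A j (p @ q) = hol A j q \<circ> hol A j p"
  by (induction p) auto

definition reverse_simplex1 :: "'k simplex1 \<Rightarrow> 'k simplex1" where
  "reverse_simplex1 b = (bd1 b, bd0 b, supp b)"

definition reverse_path :: "'k simplex1 list \<Rightarrow> 'k simplex1 list" where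
  "reverse_path p = rev (map reverse_simplex1 p)"

lemma is_path_reverse_path: "is_path K a e p \<Longrightarrow> is_path K e a (reverse_path p)"
proof (induction p arbitrary: a)
  case Nil
  then show ?case by (auto simp: reverse_path_def)
next
  case (Cons b p)
  then have "is_path K e (bd0 b) (reverse_path p)"
    and "is_path K (bd0 b) a [reverse_simplex1 b]"
    by (auto simp: reverse_simplex1_def is_simplex1_def bd0_def bd1_def supp_def)
  then show ?case
    using is_path_append by (fastforce simp: reverse_path_def)
qed

locale net_bundle =
  fixes K :: "'k::order set" and A :: "'k \<Rightarrow> 'x cstar" and j :: "'k \<Rightarrow> 'k \<Rightarrow> 'x \<Rightarrow> 'x"
  assumes net: "cstar_net_bundle K A j"
begin

lemma unital: "a \<in> K \<Longrightarrow> unital_cstar_algebra (A a)"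
  using net[unfolded cstar_net_bundle_def, THEN conjunct1] by simp

lemma iso: "a \<in> K \<Longrightarrow> e \<in> K \<Longrightarrow> a \<le> e \<Longrightarrow> star_iso (A a) (A e) (j e a)"
  using net[unfolded cstar_net_bundle_def, THEN conjunct2, THEN conjunct1] by simp

lemma compose:
  "d \<in> K \<Longrightarrow> a \<in> K \<Longrightarrow> e \<in> K \<Longrightarrow> d \<le> a \<Longrightarrow> a \<le> e \<Longrightarrow> x \<in> cs_carrier (A d) \<Longrightarrow>
    j e a (j a d x) = j e d x"
  using net[unfolded cstar_net_bundle_def, THEN conjunct2, THEN conjunct2] by simp

lemma inv_into_j_self:
  assumes a: "a \<in> K" and x: "x \<in> cs_carrier (A a)"
  shows "inv_into (cs_carrier (A a)) (j a a) x = x"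
proof -
  have bij: "bij_betw (j a a) (cs_carrier (A a)) (cs_carrier (A a))"
    using star_iso_bij[OF iso[OF a a]] by simp
  have "j a a (j a a x) = j a a x" using compose[OF a a a _ _ x] by simp
  then have "j a a x = x"
    using bij x bij_betw_apply[OF bij x] unfolding bij_betw_def by (meson inj_onD)
  then show ?thesis using bij_betw_inv_into_left[OF bij x] by simp
qed

lemma iso_supp:
  "is_simplex1 K b \<Longrightarrow> star_iso (A (bd0 b)) (A (supp b)) (j (supp b) (bd0 b))"
  "is_simplex1 K b \<Longrightarrow> star_iso (A (bd1 b)) (A (supp b)) (j (supp b) (bd1 b))"
  unfolding is_simplex1_def by (auto intro: iso)

lemma hol1_iso: "is_simplex1 K b \<Longrightarrow> star_iso (A (bd1 b)) (A (bd0 b)) (hol1 A j b)"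
  unfolding hol1_def
  using star_iso_comp[OF iso_supp(2) star_iso_inv_into[OF iso_supp(1)]] unital
  by (auto simp: is_simplex1_def)

lemma j_supp_hol1:
  assumes b: "is_simplex1 K b" and x: "x \<in> cs_carrier (A (bd1 b))"
  shows "j (supp b) (bd0 b) (hol1 A j b x) = j (supp b) (bd1 b) x"
  unfolding hol1_def
  using bij_betw_inv_into_right[OF star_iso_bij[OF iso_supp(1)[OF b]]]
    star_iso_in_carrier[OF iso_supp(2)[OF b] x]
  by simp

lemma hol_iso: "is_path K a e p \<Longrightarrow> star_iso (A a) (A e) (hol A j p)"
proof (induction p arbitrary: a)
  case Nil
  then show ?case using star_iso_id[of "A e"] by (auto simp: id_def)
next
  case (Cons b p)
  then have b: "is_simplex1 K b" "bd1 b = a" "is_path K (bd0 b) e p" by auto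
  show ?case using star_iso_comp[OF hol1_iso[OF b(1)] Cons.IH[OF b(3)]] b(2) by (simp add: comp_def)
qed

lemma hol_in_carrier: "is_path K a e p \<Longrightarrow> x \<in> cs_carrier (A a) \<Longrightarrow> hol A j p x \<in> cs_carrier (A e)"
  using star_iso_in_carrier[OF hol_iso] .

lemma hol1_reverse_simplex1:
  assumes b: "is_simplex1 K b" and x: "x \<in> cs_carrier (A (bd1 b))"
  shows "hol1 A j (reverse_simplex1 b) (hol1 A j b x) = x"
proof -
  have "hol1 A j (reverse_simplex1 b) (hol1 A j b x)
      = inv_into (cs_carrier (A (bd1 b))) (j (supp b) (bd1 b)) (j (supp b) (bd1 b) x)"
    using j_supp_hol1[OF b x] by (simp add: hol1_def reverse_simplex1_def bd0_def bd1_def supp_def)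
  also have "\<dots> = x"
    using bij_betw_inv_into_left[OF star_iso_bij[OF iso_supp(2)[OF b]] x] .
  finally show ?thesis .
qed

lemma hol_reverse_path:
  "is_path K a e p \<Longrightarrow> x \<in> cs_carrier (A a) \<Longrightarrow> hol A j (reverse_path p) (hol A j p x) = x"
proof (induction p arbitrary: a x)
  case Nil
  then show ?case by (simp add: reverse_path_def)
next
  case (Cons b p)
  then have b: "is_simplex1 K b" "bd1 b = a" "is_path K (bd0 b) e p" by auto
  have "hol1 A j b x \<in> cs_carrier (A (bd0 b))"
    using star_iso_in_carrier[OF hol1_iso[OF b(1)]] Cons.prems(2) b(2) by simp
  then show ?case
    using Cons.IH[OF b(3)] hol1_reverse_simplex1[OF b(1)] Cons.prems(2) b(2)
    by (simp add: reverse_path_def hol_append)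
qed

lemma net_state_hol1:
  assumes \<omega>: "net_state K A j \<omega>" and b: "is_simplex1 K b" and x: "x \<in> cs_carrier (A (bd1 b))"
  shows "\<omega> (bd0 b) (hol1 A j b x) = \<omega> (bd1 b) x"
proof -
  have compatible: "\<omega> a y = \<omega> e (j e a y)"
    if "a \<in> K" "e \<in> K" "a \<le> e" "y \<in> cs_carrier (A a)" for a e y
    using \<omega> that unfolding net_state_def by blast
  have faces: "supp b \<in> K" "bd0 b \<in> K" "bd1 b \<in> K" "bd0 b \<le> supp b" "bd1 b \<le> supp b"
    using b unfolding is_simplex1_def by auto
  have "\<omega> (bd0 b) (hol1 A j b x) = \<omega> (supp b) (j (supp b) (bd0 b) (hol1 A j b x))"
    using compatible faces star_iso_in_carrier[OF hol1_iso[OF b] x] by blast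
  also have "\<dots> = \<omega> (supp b) (j (supp b) (bd1 b) x)"
    using j_supp_hol1[OF b x] by simp
  also have "\<dots> = \<omega> (bd1 b) x"
    using compatible faces x by simp
  finally show ?thesis .
qed

lemma net_state_hol:
  "net_state K A j \<omega> \<Longrightarrow> is_path K a e p \<Longrightarrow> x \<in> cs_carrier (A a) \<Longrightarrow> \<omega> e (hol A j p x) = \<omega> a x"
proof (induction p arbitrary: a x)
  case Nil
  then show ?case by simp
next
  case (Cons b p)
  then have b: "is_simplex1 K b" "bd1 b = a" "is_path K (bd0 b) e p" by auto
  have "hol1 A j b x \<in> cs_carrier (A (bd0 b))"
    using star_iso_in_carrier[OF hol1_iso[OF b(1)]] Cons.prems(3) b(2) by simp
  then show ?case
    using Cons.IH[OF Cons.prems(1) b(3)] net_state_hol1[OF Cons.prems(1) b(1)] Cons.prems(3) b(2)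
    by simp
qed

lemma invariant_state_path_independent:
  assumes \<phi>: "invariant_state K A j z \<phi>" and p: "is_path K a z p" and q: "is_path K a z q"
    and x: "x \<in> cs_carrier (A a)"
  shows "\<phi> (hol A j p x) = \<phi> (hol A j q x)"
proof -
  have loop: "is_path K z z (reverse_path p @ q)"
    using is_path_append[OF is_path_reverse_path[OF p] q] .
  have "\<phi> (hol A j q x) = \<phi> (hol A j (reverse_path p @ q) (hol A j p x))"
    using hol_reverse_path[OF p x] by (simp add: hol_append)
  also have "\<dots> = \<phi> (hol A j p x)"
    using \<phi> loop hol_in_carrier[OF p x] unfolding invariant_state_def by blast
  finally show ?thesis by simp
qed

lemma invariant_state_restrict_net_state:
  assumes \<omega>: "net_state K A j \<omega>" and z: "z \<in> K"
  shows "invariant_state K A j z (\<omega> z)"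
proof -
  have "is_state (A z) (\<omega> z)" using \<omega> z unfolding net_state_def by blast
  then show ?thesis using net_state_hol[OF \<omega>] unfolding invariant_state_def by blast
qed

lemma net_state_eqI:
  assumes \<omega>: "net_state K A j \<omega>" and \<omega>': "net_state K A j \<omega>'"
    and K: "pathwise_connected K" and z: "z \<in> K" and eq: "\<omega> z = \<omega>' z"
  shows "\<omega> = \<omega>'"
proof (intro ext)
  fix a x
  show "\<omega> a x = \<omega>' a x"
  proof (cases "a \<in> K")
    case False
    then show ?thesis using \<omega> \<omega>' unfolding net_state_def extensional_def by auto
  next
    case a: True
    then obtain p where p: "is_path K a z p"
      using K z unfolding pathwise_connected_def by blast
    have states: "is_state (A a) (\<omega> a)" "is_state (A a) (\<omega>' a)"
      using \<omega> \<omega>' a unfolding net_state_def by auto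
    show ?thesis
    proof (cases "x \<in> cs_carrier (A a)")
      case True
      then show ?thesis using net_state_hol[OF \<omega> p True] net_state_hol[OF \<omega>' p True] eq by simp
    next
      case False
      then show ?thesis using states is_state_extensional by metis
    qed
  qed
qed

lemma invariant_state_extends_to_net_state:
  assumes K: "pathwise_connected K" and z: "z \<in> K" and \<phi>: "invariant_state K A j z \<phi>"
  shows "\<exists>\<omega>. net_state K A j \<omega> \<and> \<omega> z = \<phi>"
proof -
  define P where "P a = (SOME p. is_path K a z p)" for a
  have P: "is_path K a z (P a)" if "a \<in> K" for a
    using K z that unfolding P_def pathwise_connected_def by (metis someI_ex)
  define \<omega> where "\<omega> = (\<lambda>a\<in>K. restrict (\<phi> \<circ> hol A j (P a)) (cs_carrier (A a)))"
  have \<phi>_state: "is_state (A z) \<phi>" using \<phi> unfolding invariant_state_def by blast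
  have "\<omega> z = \<phi>"
  proof
    fix x
    show "\<omega> z x = \<phi> x"
    proof (cases "x \<in> cs_carrier (A z)")
      case True
      then show ?thesis using \<phi> P[OF z] z unfolding \<omega>_def invariant_state_def by simp
    next
      case False
      then show ?thesis using z is_state_extensional[OF \<phi>_state] unfolding \<omega>_def by simp
    qed
  qed
  moreover have "net_state K A j \<omega>"
    unfolding net_state_def
  proof (intro conjI ballI impI)
    show "\<omega> \<in> extensional K" unfolding \<omega>_def by simp
  next
    fix a assume a: "a \<in> K"
    show "is_state (A a) (\<omega> a)"
      using a is_state_star_iso_pullback[OF hol_iso[OF P[OF a]] unital[OF a] \<phi>_state]
      unfolding \<omega>_def by simp
  next
    fix a e x assume a: "a \<in> K" and e: "e \<in> K" and le: "a \<le> e" and x: "x \<in> cs_carrier (A a)"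
    have jx: "j e a x \<in> cs_carrier (A e)" using star_iso_in_carrier[OF iso[OF a e le] x] .
    have step: "is_path K a z ((e, a, e) # P e)"
      using a e le P[OF e] by (simp add: is_simplex1_def bd0_def bd1_def supp_def)
    have "hol1 A j (e, a, e) x = j e a x"
      using inv_into_j_self[OF e jx] by (simp add: hol1_def bd0_def bd1_def supp_def)
    then have "\<phi> (hol A j (P a) x) = \<phi> (hol A j (P e) (j e a x))"
      using invariant_state_path_independent[OF \<phi> P[OF a] step x] by simp
    then show "\<omega> a x = \<omega> e (j e a x)"
      using a e x jx unfolding \<omega>_def by simp
  qed
  ultimately show ?thesis by blast
qed

end

theorem lemma4p1:
  fixes K :: "'k::order set" and A :: "'k \<Rightarrow> 'x cstar" and j :: "'k \<Rightarrow> 'k \<Rightarrow> 'x \<Rightarrow> 'x"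
    and z :: 'k
  assumes "cstar_net_bundle K A j"
    and "pathwise_connected K"
    and "z \<in> K"
  shows "bij_betw (\<lambda>\<omega>. \<omega> z) {\<omega>. net_state K A j \<omega>} {\<phi>. invariant_state K A j z \<phi>}"
proof -
  interpret net_bundle K A j using assms(1) by unfold_locales
  have "inj_on (\<lambda>\<omega>. \<omega> z) {\<omega>. net_state K A j \<omega>}"
    unfolding inj_on_def using net_state_eqI[OF _ _ assms(2,3)] by blast
  moreover have "(\<lambda>\<omega>. \<omega> z) ` {\<omega>. net_state K A j \<omega>} \<subseteq> {\<phi>. invariant_state K A j z \<phi>}"
    using invariant_state_restrict_net_state[OF _ assms(3)] by blast
  moreover have "{\<phi>. invariant_state K A j z \<phi>} \<subseteq> (\<lambda>\<omega>. \<omega> z) ` {\<omega>. net_state K A j \<omega>}"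
    using invariant_state_extends_to_net_state[OF assms(2,3)] by force
  ultimately show ?thesis unfolding bij_betw_def by blast
qed

end
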